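(* Let $n,d,c\in\mathbb{N}$ with $d\ge 50$ and $c\in[d]$, let $\mathcal{F}\subseteq 2^{[n]}$ be a hereditary family with $\delta(\mathcal{F})\ge 2^{d-1}-c+1$, and let $P$ be an isolated pile of $\mathcal{F}$. If $\sum_{x\in P}\omega_{\mathcal{F}}(x)<2^d-c$, then: (1) $P$ contains at most $7$ good vertices; (2) $t\le d+4$; (3) every $N\in\mathcal{N}$ satisfies $|N|\le 3$; (4) for every bad vertex $x\in P$, $\{x\}\in\mathcal{N}$.
   Context: A family is hereditary if it is closed under taking subsets. $d_{\mathcal{F}}(x)=|\{F\in\mathcal{F}:x\in F\}|$, $\delta(\mathcal{F})=\min_x d_{\mathcal{F}}(x)$, $N(x)=\bigcup_{x\in F\in\mathcal{F}}F$. The weight of $x$ is $\omega_{\mathcal{F}}(x)=\sum_{x\in F\in\mathcal{F}}\frac{1}{|F|}$. A vertex $x$ is good if $|N(x)|\ge d+1$ and bad if $|N(x)|=d$. A set $P\subseteq[n]$ with $|P|=d$ is a pile of $\mathcal{F}$ if $P\subseteq N(y)$ for every $y\in P$, and there exists $z\in P$ with $N(z)=P$; a pile is isolated if it is disjoint from every other pile. Given the pile $P$, let $\mathcal{G}=\{S\subseteq P: S\in\mathcal{F}\}$, $t=2^d-|\mathcal{G}|$, $\mathcal{M}=2^{P}\setminus\mathcal{G}$, and $\mathcal{N}=\{P\setminus M: M\in\mathcal{M}\}$ (so $|\mathcal{N}|=t$ and $\mathcal{N}$ is hereditary). *)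

theory Defs
  imports "HOL-Analysis.Analysis"
begin

definition hereditary :: "nat set set \<Rightarrow> bool" where
  "hereditary F \<longleftrightarrow> (\<forall>A\<in>F. \<forall>B. B \<subseteq> A \<longrightarrow> B \<in> F)"

definition deg :: "nat set set \<Rightarrow> nat \<Rightarrow> nat" where
  "deg F x = card {A\<in>F. x \<in> A}"

definition min_deg :: "nat \<Rightarrow> nat set set \<Rightarrow> nat" where
  "min_deg n F = Min ((deg F) ` {1..n})"

definition nbhd :: "nat set set \<Rightarrow> nat \<Rightarrow> nat set" where
  "nbhd F x = \<Union> {A\<in>F. x \<in> A}"

definition weight :: "nat set set \<Rightarrow> nat \<Rightarrow> real" where
  "weight F x = (\<Sum>A\<in>{A\<in>F. x \<in> A}. 1 / real (card A))"

definition good :: "nat set set \<Rightarrow> nat \<Rightarrow> nat \<Rightarrow> bool" where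
  "good F d x \<longleftrightarrow> card (nbhd F x) \<ge> d + 1"

definition bad :: "nat set set \<Rightarrow> nat \<Rightarrow> nat \<Rightarrow> bool" where
  "bad F d x \<longleftrightarrow> card (nbhd F x) = d"

definition is_pile :: "nat \<Rightarrow> nat set set \<Rightarrow> nat \<Rightarrow> nat set \<Rightarrow> bool" where
  "is_pile n F d P \<longleftrightarrow> P \<subseteq> {1..n} \<and> card P = d \<and>
     (\<forall>y\<in>P. P \<subseteq> nbhd F y) \<and> (\<exists>z\<in>P. nbhd F z = P)"

definition isolated_pile :: "nat \<Rightarrow> nat set set \<Rightarrow> nat \<Rightarrow> nat set \<Rightarrow> bool" where
  "isolated_pile n F d P \<longleftrightarrow> is_pile n F d P \<and>
     (\<forall>Q. is_pile n F d Q \<and> Q \<noteq> P \<longrightarrow> P \<inter> Q = {})"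

definition pileG :: "nat set set \<Rightarrow> nat set \<Rightarrow> nat set set" where
  "pileG F P = {S. S \<subseteq> P \<and> S \<in> F}"

definition pileM :: "nat set set \<Rightarrow> nat set \<Rightarrow> nat set set" where
  "pileM F P = Pow P - pileG F P"

definition pileN :: "nat set set \<Rightarrow> nat set \<Rightarrow> nat set set" where
  "pileN F P = (\<lambda>M. P - M) ` pileM F P"

definition pile_t :: "nat set set \<Rightarrow> nat \<Rightarrow> nat set \<Rightarrow> nat" where
  "pile_t F d P = 2 ^ d - card (pileG F P)"

end

theory Submission
  imports Defs
begin

text \<open>
  Let \<open>\<M>\<close> be the family of subsets of \<open>P\<close> missing from \<open>F\<close>, \<open>t = |\<M>|\<close>, and call a set
  of \<open>F\<close> crossing if it meets \<open>P\<close> without lying inside \<open>P\<close>. Counting the weight of \<open>P\<close> set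
  by set gives \<open>|F \<inter> Pow P| - 1 + S\<close>, where \<open>S\<close> is the contribution of the crossing sets, so
  the weight hypothesis reads \<open>S < t + 1 - c\<close>. The degree hypothesis says that every
  \<open>x \<in> P\<close> lies in at most \<open>c - 1 + e(x)\<close> members of \<open>\<M>\<close>, \<open>e(x)\<close> being the number of
  crossing sets through \<open>x\<close>. A vertex \<open>z\<close> with \<open>N(z) = P\<close> has \<open>e(z) = 0\<close>, and as \<open>\<M>\<close> is
  closed upwards this gives \<open>t \<le> 2c - 2 < 2d\<close>. Since \<open>\<N>\<close> is closed downwards, its
  members have size at most \<open>log t \<le> d/6\<close>; a crossing set \<open>A\<close> has \<open>2 ^ (|A| - 2)\<close> crossing
  subsets, each contributing at least \<open>1/|A|\<close> to \<open>S\<close>, so \<open>|A| \<le> d/4\<close>. Double counting the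
  incidences of \<open>P\<close> with the crossing sets and with the members of \<open>\<N>\<close> of size at least 2
  now forces \<open>t = c\<close>. Hence at most one vertex is good, \<open>\<N>\<close> consists of \<open>\<emptyset>\<close> and
  singletons, and a bad vertex \<open>x\<close>, lying in fewer than \<open>t\<close> members of \<open>\<M>\<close>, has \<open>{x} \<in> \<N>\<close>.
\<close>

lemma card_supersets_within:
  assumes "finite P" "X \<subseteq> P"
  shows "card {A. X \<subseteq> A \<and> A \<subseteq> P} = 2 ^ (card P - card X)"
proof -
  have "{A. X \<subseteq> A \<and> A \<subseteq> P} = (\<union>) X ` Pow (P - X)"
  proof (intro equalityI subsetI)
    fix A assume "A \<in> {A. X \<subseteq> A \<and> A \<subseteq> P}"
    then have "A = X \<union> (A - X)" "A - X \<in> Pow (P - X)" by auto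
    then show "A \<in> (\<union>) X ` Pow (P - X)" by blast
  qed (use assms(2) in auto)
  moreover have "inj_on ((\<union>) X) (Pow (P - X))"
    by (auto simp: inj_on_def)
  ultimately show ?thesis
    using assms by (simp add: card_image card_Pow card_Diff_subset finite_subset)
qed

lemma sum_card_incidences:
  assumes "finite P" "finite \<A>"
  shows "(\<Sum>x\<in>P. card {A\<in>\<A>. x \<in> A}) = (\<Sum>A\<in>\<A>. card (A \<inter> P))"
  using sum.swap_restrict[OF assms, of "\<lambda>_ _. 1::nat" "\<lambda>x A. x \<in> A"]
  by (simp add: Int_def conj_commute)

lemma card_filter_plus_card_filter_not:
  assumes "finite A"
  shows "card {x\<in>A. Q x} + card {x\<in>A. \<not> Q x} = card A"
proof -
  have "card A = card ({x\<in>A. Q x} \<union> {x\<in>A. \<not> Q x})"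
    by (rule arg_cong[where f=card]) blast
  also have "\<dots> = card {x\<in>A. Q x} + card {x\<in>A. \<not> Q x}"
    using assms by (intro card_Un_disjoint) auto
  finally show ?thesis by simp
qed

lemma card_le_twice_card_containing:
  assumes "finite \<M>" "\<And>B. B \<in> \<M> \<Longrightarrow> insert z B \<in> \<M>"
  shows "card \<M> \<le> 2 * card {B\<in>\<M>. z \<in> B}"
proof -
  have "inj_on (insert z) {B\<in>\<M>. z \<notin> B}"
    by (auto simp: inj_on_def)
  moreover have "insert z ` {B\<in>\<M>. z \<notin> B} \<subseteq> {B\<in>\<M>. z \<in> B}"
    using assms(2) by auto
  ultimately have "card {B\<in>\<M>. z \<notin> B} \<le> card {B\<in>\<M>. z \<in> B}"
    using assms(1) by (intro card_inj_on_le) auto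
  then show ?thesis
    using card_filter_plus_card_filter_not[OF assms(1), of "\<lambda>B. z \<in> B"] by linarith
qed

lemma two_pow_card_le_card_if_downward_closed:
  assumes "finite \<N>" "N \<in> \<N>" "\<And>N'. N' \<subseteq> N \<Longrightarrow> N' \<in> \<N>"
  shows "2 ^ card N \<le> card \<N>"
proof -
  have sub: "Pow N \<subseteq> \<N>" using assms(3) by blast
  then have "finite N" using assms(1) finite_subset by fastforce
  then have "2 ^ card N = card (Pow N)" by (simp add: card_Pow)
  also have "\<dots> \<le> card \<N>" using assms(1) sub by (rule card_mono)
  finally show ?thesis .
qed

lemma twelve_mult_le_pow2: "7 \<le> L \<Longrightarrow> 12 * L \<le> (2::nat) ^ L"
  by (induction L rule: nat_induct_at_least) simp_all

lemma four_mult_square_le_pow2: "13 \<le> K \<Longrightarrow> 4 * K * K \<le> (2::nat) ^ (K - 2)"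
proof (induction K rule: nat_induct_at_least)
  case (Suc K)
  have "13 * K \<le> K * K" using Suc.hyps by simp
  have "4 * Suc K * Suc K = 4 * (K * K) + 8 * K + 4" by (simp add: algebra_simps)
  also have "\<dots> \<le> 2 * (4 * K * K)" using \<open>13 * K \<le> K * K\<close> Suc.hyps by linarith
  also have "\<dots> \<le> 2 * 2 ^ (K - 2)"
    using Suc.IH by simp
  also have "\<dots> = 2 ^ Suc (K - 2)" by simp
  also have "Suc (K - 2) = Suc K - 2" using Suc.hyps by simp
  finally show ?case .
qed simp

lemma six_mult_le_if_pow2_less:
  assumes "50 \<le> d" "2 ^ L < 2 * (d::nat)"
  shows "6 * L \<le> d"
proof (cases "L \<le> 8")
  case False
  then show ?thesis using assms(2) twelve_mult_le_pow2[of L] by linarith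
qed (use assms(1) in linarith)

lemma four_mult_le_if_pow2_less:
  assumes "50 \<le> d" "2 ^ (K - 2) < K * (d::nat)"
  shows "4 * K \<le> d"
proof (rule ccontr)
  assume "\<not> 4 * K \<le> d"
  then have "13 \<le> K" "K * d \<le> 4 * K * K" using assms(1) by auto
  then show False using assms(2) four_mult_square_le_pow2[of K] by linarith
qed

definition crossing :: "nat set set \<Rightarrow> nat set \<Rightarrow> nat set set" where
  "crossing F P = {A\<in>F. A \<inter> P \<noteq> {} \<and> \<not> A \<subseteq> P}"

definition crossing_weight :: "nat set set \<Rightarrow> nat set \<Rightarrow> real" where
  "crossing_weight F P = (\<Sum>A\<in>crossing F P. real (card (A \<inter> P)) / real (card A))"

lemma hereditaryD: "hereditary F \<Longrightarrow> A \<in> F \<Longrightarrow> B \<subseteq> A \<Longrightarrow> B \<in> F"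
  unfolding hereditary_def by blast

lemma sum_weight_eq:
  assumes "finite F" "\<And>A. A \<in> F \<Longrightarrow> finite A" "{} \<in> F" "finite P"
  shows "(\<Sum>x\<in>P. weight F x) = real (card (pileG F P)) - 1 + crossing_weight F P"
proof -
  have G: "{} \<in> pileG F P" "finite (pileG F P)"
    using assms(1,3) by (simp_all add: pileG_def)
  define h where "h A = real (card (A \<inter> P)) / real (card A)" for A
  have "(\<Sum>x\<in>P. weight F x) = (\<Sum>A\<in>F. h A)"
    unfolding weight_def h_def
    using sum.swap_restrict[OF assms(4,1), of "\<lambda>_ A. 1 / real (card A)" "\<lambda>x A. x \<in> A"]
    by (simp add: Int_def conj_commute)
  also have "\<dots> = (\<Sum>A\<in>pileG F P - {{}} \<union> crossing F P. h A)"
    using assms(1) by (intro sum.mono_neutral_right) (auto simp: h_def pileG_def crossing_def)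
  also have "\<dots> = (\<Sum>A\<in>pileG F P - {{}}. h A) + crossing_weight F P"
    using assms(1) unfolding crossing_weight_def h_def
    by (intro sum.union_disjoint) (auto simp: pileG_def crossing_def)
  also have "(\<Sum>A\<in>pileG F P - {{}}. h A) = real (card (pileG F P - {{}}))"
    using assms(2) by (simp add: h_def pileG_def Int_absorb2 card_eq_0_iff)
  also have "\<dots> = real (card (pileG F P)) - 1"
    using G card_gt_0_iff[of "pileG F P"] by (auto simp: of_nat_diff Suc_le_eq)
  finally show ?thesis .
qed

lemma card_pileG_plus_card_pileM:
  assumes "finite P"
  shows "card (pileG F P) + card (pileM F P) = 2 ^ card P"
proof -
  have sub: "pileG F P \<subseteq> Pow P" by (auto simp: pileG_def)
  then have "card (pileM F P) = card (Pow P) - card (pileG F P)"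
    unfolding pileM_def using assms by (intro card_Diff_subset) (auto intro: finite_subset)
  moreover have "card (pileG F P) \<le> card (Pow P)"
    using sub assms by (intro card_mono) auto
  ultimately show ?thesis using assms by (simp add: card_Pow)
qed

lemma card_pileG_containing_plus_card_pileM_containing:
  assumes "finite P" "x \<in> P"
  shows "card {A\<in>pileG F P. x \<in> A} + card {B\<in>pileM F P. x \<in> B} = 2 ^ (card P - 1)"
proof -
  have "2 ^ (card P - 1) = card {A. {x} \<subseteq> A \<and> A \<subseteq> P}"
    using assms card_supersets_within[of P "{x}"] by simp
  also have "\<dots> = card ({A\<in>pileG F P. x \<in> A} \<union> {B\<in>pileM F P. x \<in> B})"
    by (rule arg_cong[where f=card]) (auto simp: pileM_def pileG_def)
  also have "\<dots> = card {A\<in>pileG F P. x \<in> A} + card {B\<in>pileM F P. x \<in> B}"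
    using assms(1) by (intro card_Un_disjoint) (auto simp: pileM_def pileG_def intro: finite_subset[of _ "Pow P"])
  finally show ?thesis by simp
qed

lemma pileM_upward:
  "hereditary F \<Longrightarrow> B \<in> pileM F P \<Longrightarrow> B \<subseteq> B' \<Longrightarrow> B' \<subseteq> P \<Longrightarrow> B' \<in> pileM F P"
  unfolding pileM_def pileG_def by (auto dest: hereditaryD)

lemma pileN_iff: "N \<subseteq> P \<Longrightarrow> N \<in> pileN F P \<longleftrightarrow> P - N \<in> pileM F P"
  unfolding pileN_def pileM_def by (auto simp: double_diff image_iff)

lemma pileN_subset: "N \<in> pileN F P \<Longrightarrow> N \<subseteq> P"
  unfolding pileN_def by auto

lemma inj_on_diff_Pow: "inj_on (\<lambda>B. P - B) (Pow P)"
  by (rule inj_onI) (auto simp: double_diff)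

lemma card_pileN: "card (pileN F P) = card (pileM F P)"
  unfolding pileN_def pileM_def
  by (rule card_image, rule inj_on_subset[OF inj_on_diff_Pow]) auto

lemma pileN_downward:
  assumes "hereditary F" "N \<in> pileN F P" "N' \<subseteq> N"
  shows "N' \<in> pileN F P"
proof -
  have "N \<subseteq> P" using assms(2) by (rule pileN_subset)
  then have "P - N \<in> pileM F P" using assms(2) pileN_iff by blast
  then have "P - N' \<in> pileM F P"
    by (rule pileM_upward[OF assms(1)]) (use assms(3) in auto)
  then show ?thesis using \<open>N \<subseteq> P\<close> assms(3) pileN_iff[of N'] by auto
qed

lemma deg_eq_card_pileG_containing_plus_card_crossing_containing:
  assumes "finite F" "x \<in> P"
  shows "deg F x = card {A\<in>pileG F P. x \<in> A} + card {A\<in>crossing F P. x \<in> A}"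
proof -
  have "deg F x = card ({A\<in>pileG F P. x \<in> A} \<union> {A\<in>crossing F P. x \<in> A})"
    unfolding deg_def using assms(2)
    by (intro arg_cong[where f=card]) (auto simp: pileG_def crossing_def)
  also have "\<dots> = card {A\<in>pileG F P. x \<in> A} + card {A\<in>crossing F P. x \<in> A}"
    by (intro card_Un_disjoint finite_subset[OF _ assms(1)]) (auto simp: pileG_def crossing_def)
  finally show ?thesis .
qed

lemma crossing_weight_nonneg: "0 \<le> crossing_weight F P"
  unfolding crossing_weight_def by (intro sum_nonneg) simp

lemma sum_le_crossing_weight:
  assumes "finite F" "\<Q> \<subseteq> crossing F P"
  shows "(\<Sum>B\<in>\<Q>. real (card (B \<inter> P)) / real (card B)) \<le> crossing_weight F P"
  unfolding crossing_weight_def using assms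
  by (intro sum_mono2) (auto simp: crossing_def)

lemma two_pow_card_le_card_mult_crossing_weight:
  assumes "finite F" "hereditary F" "A \<in> crossing F P" "finite A"
  shows "2 ^ (card A - 2) \<le> real (card A) * crossing_weight F P"
proof -
  obtain x y where x: "x \<in> A" "x \<in> P" and y: "y \<in> A" "y \<notin> P"
    using assms(3) by (auto simp: crossing_def)
  define \<Q> where "\<Q> = {B. {x, y} \<subseteq> B \<and> B \<subseteq> A}"
  have "x \<noteq> y" using x y by auto
  then have card_\<Q>: "card \<Q> = 2 ^ (card A - 2)"
    unfolding \<Q>_def using x y assms(4) card_supersets_within[of A "{x, y}"] by simp
  have A_pos: "0 < card A" using x assms(4) card_gt_0_iff by blast
  have "A \<in> F" using assms(3) by (simp add: crossing_def)
  then have \<Q>_crossing: "\<Q> \<subseteq> crossing F P"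
    using x y by (auto simp: \<Q>_def crossing_def intro: hereditaryD[OF assms(2)])
  have term_ge: "1 / real (card A) \<le> real (card (B \<inter> P)) / real (card B)" if "B \<in> \<Q>" for B
  proof -
    have "B \<subseteq> A" "x \<in> B \<inter> P" using that x by (auto simp: \<Q>_def)
    have "finite B" using \<open>B \<subseteq> A\<close> assms(4) by (rule finite_subset)
    then have "0 < card (B \<inter> P)" "0 < card B"
      using \<open>x \<in> B \<inter> P\<close> by (auto simp: card_gt_0_iff)
    moreover have "card B \<le> card A" using assms(4) \<open>B \<subseteq> A\<close> by (rule card_mono)
    ultimately show ?thesis by (simp add: frac_le)
  qed
  have "real (card \<Q>) / real (card A) = (\<Sum>B\<in>\<Q>. 1 / real (card A))" by simp
  also have "\<dots> \<le> (\<Sum>B\<in>\<Q>. real (card (B \<inter> P)) / real (card B))"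
    using term_ge by (rule sum_mono)
  also have "\<dots> \<le> crossing_weight F P"
    using assms(1) \<Q>_crossing by (rule sum_le_crossing_weight)
  finally have "real (card \<Q>) \<le> crossing_weight F P * real (card A)"
    using A_pos by (simp add: divide_le_eq)
  then show ?thesis unfolding card_\<Q> by (simp add: mult.commute)
qed

lemma card_leaving_le_twice_crossing_weight:
  assumes "finite F" "hereditary F"
  shows "real (card {x\<in>P. \<not> nbhd F x \<subseteq> P}) \<le> 2 * crossing_weight F P"
proof -
  let ?L = "{x\<in>P. \<not> nbhd F x \<subseteq> P}"
  have "\<forall>x\<in>?L. \<exists>y. y \<notin> P \<and> {x, y} \<in> F"
  proof
    fix x assume "x \<in> ?L"
    then obtain y A where "A \<in> F" "x \<in> A" "y \<in> A" "y \<notin> P"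
      by (auto simp: nbhd_def)
    moreover from this have "{x, y} \<in> F"
      using hereditaryD[OF assms(2), of A "{x, y}"] by simp
    ultimately show "\<exists>y. y \<notin> P \<and> {x, y} \<in> F" by blast
  qed
  then have "\<exists>f. \<forall>x\<in>?L. f x \<notin> P \<and> {x, f x} \<in> F" by (rule bchoice)
  then obtain f where f: "\<forall>x\<in>?L. f x \<notin> P \<and> {x, f x} \<in> F" ..
  define \<Q> where "\<Q> = (\<lambda>x. {x, f x}) ` ?L"
  have "inj_on (\<lambda>x. {x, f x}) ?L"
  proof (rule inj_onI)
    fix x x' assume x: "x \<in> ?L" "x' \<in> ?L" "{x, f x} = {x', f x'}"
    then have "x \<in> {x', f x'}" by blast
    then show "x = x'" using x f by auto
  qed
  then have card_\<Q>: "card \<Q> = card ?L" unfolding \<Q>_def by (rule card_image)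
  have \<Q>_crossing: "\<Q> \<subseteq> crossing F P"
    using f by (auto simp: \<Q>_def crossing_def)
  have term_eq: "real (card (B \<inter> P)) / real (card B) = 1 / 2" if B: "B \<in> \<Q>" for B
  proof -
    obtain x where x: "x \<in> ?L" "B = {x, f x}" using B by (auto simp: \<Q>_def)
    then have "x \<in> P" "f x \<notin> P" "x \<noteq> f x" using f by auto
    then have "B \<inter> P = {x}" "card B = 2" using x(2) by auto
    then show ?thesis by simp
  qed
  have "real (card ?L) / 2 = (\<Sum>B\<in>\<Q>. 1 / 2)"
    using card_\<Q> by simp
  also have "\<dots> = (\<Sum>B\<in>\<Q>. real (card (B \<inter> P)) / real (card B))"
    by (rule sum.cong) (simp_all add: term_eq)
  also have "\<dots> \<le> crossing_weight F P"
    using assms(1) \<Q>_crossing by (rule sum_le_crossing_weight)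
  finally show ?thesis by simp
qed

locale pile_setting =
  fixes n d c :: nat and F :: "nat set set" and P :: "nat set"
  assumes d_ge_50: "50 \<le> d" and c_pos: "1 \<le> c" and c_le_d: "c \<le> d"
    and F_subset: "F \<subseteq> Pow {1..n}" and F_hereditary: "hereditary F"
    and min_deg_ge: "int (min_deg n F) \<ge> 2 ^ (d - 1) - int c + 1"
    and pile: "is_pile n F d P"
    and weight_less: "(\<Sum>x\<in>P. weight F x) < 2 ^ d - real c"
begin

abbreviation "\<M> \<equiv> pileM F P"
abbreviation "\<N> \<equiv> pileN F P"
abbreviation "\<C> \<equiv> crossing F P"

lemma finite_F: "finite F"
  using F_subset by (rule finite_subset) simp

lemma finite_member: "A \<in> F \<Longrightarrow> finite A"
  using F_subset by (auto intro: finite_subset)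

lemma finite_nbhd: "finite (nbhd F x)"
proof -
  have "nbhd F x \<subseteq> {1..n}" using F_subset by (auto simp: nbhd_def)
  then show ?thesis by (rule finite_subset) simp
qed

lemma P_subset: "P \<subseteq> {1..n}" and card_P: "card P = d"
  and P_subset_nbhd: "y \<in> P \<Longrightarrow> P \<subseteq> nbhd F y"
  and ex_nbhd_eq_P: "\<exists>z\<in>P. nbhd F z = P"
  using pile by (auto simp: is_pile_def)

lemma finite_P: "finite P"
  using P_subset by (rule finite_subset) simp

lemma empty_in_F: "{} \<in> F"
proof -
  obtain z where "z \<in> P" using card_P d_ge_50 by fastforce
  then obtain A where "A \<in> F" using P_subset_nbhd by (fastforce simp: nbhd_def)
  then show ?thesis using F_hereditary by (blast dest: hereditaryD)
qed

lemma card_pileM_containing_le: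
  assumes "x \<in> P"
  shows "card {B\<in>\<M>. x \<in> B} + 1 \<le> c + card {A\<in>\<C>. x \<in> A}"
proof -
  have "min_deg n F \<le> deg F x"
    using assms P_subset unfolding min_deg_def by (intro Min_le) auto
  then have "int (2 ^ (d - 1) + 1) \<le> int (deg F x + c)" using min_deg_ge by simp
  then have "2 ^ (d - 1) + 1 \<le> deg F x + c" by (simp only: of_nat_le_iff)
  then show ?thesis
    using deg_eq_card_pileG_containing_plus_card_crossing_containing[OF finite_F assms]
      card_pileG_containing_plus_card_pileM_containing[OF finite_P assms, of F, unfolded card_P]
    by linarith
qed

lemma crossing_weight_less: "crossing_weight F P < real (card \<M>) + 1 - real c"
proof -
  have "real (card (pileG F P) + card \<M>) = real ((2::nat) ^ d)"
    using card_pileG_plus_card_pileM[OF finite_P, of F] card_P by (simp only:)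
  then have "real (card (pileG F P)) + real (card \<M>) = 2 ^ d" by simp
  then show ?thesis
    using weight_less sum_weight_eq[OF finite_F finite_member empty_in_F finite_P] by linarith
qed

lemma c_le_card_pileM: "c \<le> card \<M>"
  using crossing_weight_less crossing_weight_nonneg[of F P] by linarith

lemma finite_pileM: "finite \<M>"
  using finite_P by (simp add: pileM_def)

lemma finite_pileN: "finite \<N>"
  using finite_pileM by (simp add: pileN_def)

lemma finite_crossing: "finite \<C>"
  using finite_F by (simp add: crossing_def)

lemma pileM_subset: "B \<in> \<M> \<Longrightarrow> B \<subseteq> P"
  by (simp add: pileM_def)

lemma nbhd_eq_if_bad:
  assumes "x \<in> P" "bad F d x"
  shows "nbhd F x = P"
  using card_subset_eq[OF finite_nbhd P_subset_nbhd[OF assms(1)]] assms(2) card_P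
  by (simp add: bad_def)

lemma no_crossing_through_bad:
  assumes "x \<in> P" "bad F d x"
  shows "{A\<in>\<C>. x \<in> A} = {}"
  using nbhd_eq_if_bad[OF assms] by (auto simp: crossing_def nbhd_def)

lemma good_iff_not_bad:
  assumes "x \<in> P"
  shows "good F d x \<longleftrightarrow> \<not> bad F d x"
proof -
  have "d \<le> card (nbhd F x)"
    using card_mono[OF finite_nbhd P_subset_nbhd[OF assms]] card_P by simp
  then show ?thesis by (auto simp: good_def bad_def)
qed

lemma card_bad_plus_card_good: "card {x\<in>P. bad F d x} + card {x\<in>P. good F d x} = d"
proof -
  have "{x\<in>P. good F d x} = {x\<in>P. \<not> bad F d x}" using good_iff_not_bad by blast
  then show ?thesis
    using card_filter_plus_card_filter_not[OF finite_P, of "bad F d"] card_P by simp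
qed

lemma card_good_le: "real (card {x\<in>P. good F d x}) \<le> 2 * crossing_weight F P"
proof -
  have "\<not> nbhd F x \<subseteq> P" if "good F d x" for x
    using that card_mono[OF finite_P, of "nbhd F x"] card_P by (auto simp: good_def)
  then have "card {x\<in>P. good F d x} \<le> card {x\<in>P. \<not> nbhd F x \<subseteq> P}"
    using finite_P by (intro card_mono) auto
  then show ?thesis
    using card_leaving_le_twice_crossing_weight[OF finite_F F_hereditary, of P] by linarith
qed

lemma card_pileM_le: "card \<M> + 2 \<le> 2 * c"
proof -
  obtain z where z: "z \<in> P" "nbhd F z = P" using ex_nbhd_eq_P by blast
  then have "bad F d z" using card_P by (simp add: bad_def)
  then have "card {B\<in>\<M>. z \<in> B} + 1 \<le> c"
    using card_pileM_containing_le[OF z(1)] no_crossing_through_bad[OF z(1)] by simp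
  moreover have "insert z B \<in> \<M>" if "B \<in> \<M>" for B
    using pileM_upward[OF F_hereditary that, of "insert z B"] pileM_subset[OF that] z(1) by auto
  then have "card \<M> \<le> 2 * card {B\<in>\<M>. z \<in> B}"
    by (rule card_le_twice_card_containing[OF finite_pileM])
  ultimately show ?thesis by linarith
qed

lemma empty_in_pileN: "{} \<in> \<N>"
proof -
  have "\<M> \<noteq> {}" using c_le_card_pileM c_pos by auto
  then obtain B where "B \<in> \<M>" by blast
  then have "P \<in> \<M>" using pileM_upward[OF F_hereditary, of B P] pileM_subset by blast
  then show ?thesis by (simp add: pileN_iff)
qed

lemma singleton_in_pileN_if_bad:
  assumes "x \<in> P" "bad F d x"
  shows "{x} \<in> \<N>"
proof -
  have "card {B\<in>\<M>. x \<in> B} < card \<M>"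
    using card_pileM_containing_le[OF assms(1), unfolded no_crossing_through_bad[OF assms] card.empty]
      c_le_card_pileM by linarith
  then obtain B where "B \<in> \<M>" "x \<notin> B"
    by (metis (mono_tags, lifting) less_irrefl mem_Collect_eq subsetI subset_antisym)
  then have "P - {x} \<in> \<M>"
    using pileM_upward[OF F_hereditary, of B P "P - {x}"] pileM_subset by blast
  then show ?thesis using assms(1) pileN_iff[of "{x}" P F] by simp
qed

lemma card_pileN_member_le:
  assumes "N \<in> \<N>"
  shows "6 * card N \<le> d"
proof -
  have "2 ^ card N \<le> card \<N>"
    using finite_pileN assms pileN_downward[OF F_hereditary assms]
    by (rule two_pow_card_le_card_if_downward_closed)
  also have "\<dots> < 2 * d" using card_pileN[of F P] card_pileM_le c_le_d by linarith
  finally show ?thesis by (rule six_mult_le_if_pow2_less[OF d_ge_50])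
qed

lemma card_crossing_member_le:
  assumes "A \<in> \<C>"
  shows "4 * card A \<le> d"
proof -
  have "A \<in> F" "A \<inter> P \<noteq> {}" using assms by (auto simp: crossing_def)
  then have "finite A" "0 < card A" using finite_member by (auto simp: card_gt_0_iff)
  have "crossing_weight F P < real d"
    using crossing_weight_less card_pileM_le c_le_d by linarith
  then have "real (card A) * crossing_weight F P < real (card A) * real d"
    using \<open>0 < card A\<close> by simp
  then have "real (2 ^ (card A - 2)) < real (card A * d)"
    using two_pow_card_le_card_mult_crossing_weight[OF finite_F F_hereditary assms \<open>finite A\<close>]
    by simp
  then show ?thesis using four_mult_le_if_pow2_less[OF d_ge_50] by (simp only: of_nat_less_iff)
qed

lemma card_pileM_containing_plus_card_pileN_containing:
  assumes "x \<in> P"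
  shows "card {B\<in>\<M>. x \<in> B} + card {N\<in>\<N>. x \<in> N} = card \<M>"
proof -
  let ?compl = "\<lambda>B. P - B"
  have compl_image: "?compl ` {B\<in>\<M>. x \<in> B} = {N\<in>\<N>. x \<notin> N}"
  proof (intro equalityI subsetI)
    fix N assume "N \<in> {N\<in>\<N>. x \<notin> N}"
    then obtain B where B: "B \<in> \<M>" "N = P - B" "x \<notin> N" unfolding pileN_def by blast
    then have "x \<in> B" using assms by blast
    then show "N \<in> ?compl ` {B\<in>\<M>. x \<in> B}" using B by blast
  qed (unfold pileN_def, blast)
  have "inj_on ?compl {B\<in>\<M>. x \<in> B}"
    by (rule inj_on_subset[OF inj_on_diff_Pow]) (auto dest: pileM_subset)
  then have "card {B\<in>\<M>. x \<in> B} = card {N\<in>\<N>. x \<notin> N}"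
    unfolding compl_image[symmetric] by (rule card_image[symmetric])
  then show ?thesis
    using card_filter_plus_card_filter_not[OF finite_pileN, of "\<lambda>N. x \<in> N"] card_pileN[of F P]
    by linarith
qed

lemma card_pileM_le_at_vertex:
  assumes "x \<in> P"
  shows "card \<M> \<le> c + card {A\<in>\<C>. x \<in> A} + card {N\<in>{N\<in>\<N>. 2 \<le> card N}. x \<in> N}"
proof -
  let ?L = "{N\<in>{N\<in>\<N>. 2 \<le> card N}. x \<in> N}"
  have "{N\<in>\<N>. x \<in> N} \<subseteq> insert {x} ?L"
  proof
    fix N assume N: "N \<in> {N\<in>\<N>. x \<in> N}"
    then have "N \<subseteq> P" using pileN_subset by blast
    then have "finite N" using finite_P by (rule finite_subset)
    show "N \<in> insert {x} ?L"
    proof (cases "2 \<le> card N")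
      case False
      moreover have "card N \<noteq> 0" using \<open>finite N\<close> N by auto
      ultimately have "card N = 1" by linarith
      then obtain y where "N = {y}" by (rule card_1_singletonE)
      then show ?thesis using N by simp
    qed (use N in simp)
  qed
  moreover have "finite ?L" using finite_pileN by (rule rev_finite_subset) blast
  ultimately have "card {N\<in>\<N>. x \<in> N} \<le> card ?L + 1"
    using card_mono[of "insert {x} ?L"] card_insert_if[of ?L "{x}"] by fastforce
  then show ?thesis
    using card_pileM_containing_le[OF assms] card_pileM_containing_plus_card_pileN_containing[OF assms]
    by linarith
qed

lemma card_large_pileN_le:
  "card {N\<in>\<N>. 2 \<le> card N} + 1 + card {x\<in>P. bad F d x} \<le> card \<M>"
proof -
  let ?S = "(\<lambda>x. {x}) ` {x\<in>P. bad F d x}" and ?L = "{N\<in>\<N>. 2 \<le> card N}"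
  have "insert {} (?L \<union> ?S) \<subseteq> \<N>"
    using empty_in_pileN singleton_in_pileN_if_bad by auto
  then have "card (insert {} (?L \<union> ?S)) \<le> card \<N>"
    by (rule card_mono[OF finite_pileN])
  moreover have "card ?S = card {x\<in>P. bad F d x}"
    by (rule card_image) (simp add: inj_on_def)
  moreover have "card (?L \<union> ?S) = card ?L + card ?S"
    using finite_pileN finite_P by (intro card_Un_disjoint) auto
  moreover have "{} \<notin> ?L \<union> ?S" by auto
  then have "card (insert {} (?L \<union> ?S)) = card (?L \<union> ?S) + 1"
    using finite_pileN finite_P by simp
  ultimately show ?thesis using card_pileN[of F P] by linarith
qed

lemma card_good_less: "card {x\<in>P. good F d x} < 2 * (card \<M> - c) + 2"
proof -
  have "real (card {x\<in>P. good F d x}) < real (2 * (card \<M> - c) + 2)"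
    using card_good_le crossing_weight_less c_le_card_pileM by (simp add: of_nat_diff)
  then show ?thesis by (simp only: of_nat_less_iff)
qed

lemma card_large_pileN_le_three_mult: "card {N\<in>\<N>. 2 \<le> card N} \<le> 3 * (card \<M> - c)"
  using card_large_pileN_le card_bad_plus_card_good card_good_less c_le_card_pileM c_le_d
  by linarith

lemma sum_card_crossing_inter_le:
  "4 * real (\<Sum>A\<in>\<C>. card (A \<inter> P)) \<le> real d * crossing_weight F P"
proof -
  have term_le: "4 * real (card (A \<inter> P)) \<le> real d * (real (card (A \<inter> P)) / real (card A))"
    if A: "A \<in> \<C>" for A
  proof -
    have "A \<in> F" "A \<inter> P \<noteq> {}" using A by (auto simp: crossing_def)
    then have "0 < card A" using finite_member by (auto simp: card_gt_0_iff)
    have "real (4 * card A) \<le> real d" using card_crossing_member_le[OF A] by (simp only: of_nat_le_iff)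
    then have "4 * real (card A) * (real (card (A \<inter> P)) / real (card A))
        \<le> real d * (real (card (A \<inter> P)) / real (card A))"
      by (intro mult_right_mono) simp_all
    then show ?thesis using \<open>0 < card A\<close> by simp
  qed
  have "4 * real (\<Sum>A\<in>\<C>. card (A \<inter> P)) = (\<Sum>A\<in>\<C>. 4 * real (card (A \<inter> P)))"
    by (simp add: sum_distrib_left)
  also have "\<dots> \<le> (\<Sum>A\<in>\<C>. real d * (real (card (A \<inter> P)) / real (card A)))"
    using term_le by (rule sum_mono)
  also have "\<dots> = real d * crossing_weight F P"
    by (simp add: crossing_weight_def sum_distrib_left)
  finally show ?thesis .
qed

lemma sum_card_large_pileN_le:
  "6 * (\<Sum>N\<in>{N\<in>\<N>. 2 \<le> card N}. card N) \<le> d * card {N\<in>\<N>. 2 \<le> card N}"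
proof -
  have "(\<Sum>N\<in>{N\<in>\<N>. 2 \<le> card N}. 6 * card N) \<le> (\<Sum>N\<in>{N\<in>\<N>. 2 \<le> card N}. d)"
    using card_pileN_member_le by (intro sum_mono) simp
  then show ?thesis by (simp add: sum_distrib_left mult.commute)
qed

lemma d_mult_excess_le_incidences:
  "d * (card \<M> - c) \<le> (\<Sum>A\<in>\<C>. card (A \<inter> P)) + (\<Sum>N\<in>{N\<in>\<N>. 2 \<le> card N}. card N)"
proof -
  let ?L = "{N\<in>\<N>. 2 \<le> card N}"
  have "finite ?L" using finite_pileN by simp
  have "d * (card \<M> - c) = (\<Sum>x\<in>P. card \<M> - c)" using card_P by simp
  also have "\<dots> \<le> (\<Sum>x\<in>P. card {A\<in>\<C>. x \<in> A} + card {N\<in>?L. x \<in> N})"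
    using card_pileM_le_at_vertex by (intro sum_mono) fastforce
  also have "\<dots> = (\<Sum>A\<in>\<C>. card (A \<inter> P)) + (\<Sum>N\<in>?L. card (N \<inter> P))"
    using sum_card_incidences[OF finite_P finite_crossing] sum_card_incidences[OF finite_P \<open>finite ?L\<close>]
    by (simp add: sum.distrib)
  also have "(\<Sum>N\<in>?L. card (N \<inter> P)) = (\<Sum>N\<in>?L. card N)"
    using pileN_subset by (intro sum.cong) (auto simp: Int_absorb2)
  finally show ?thesis .
qed

lemma card_pileM_eq: "card \<M> = c"
proof -
  \<comment> \<open>With \<open>S\<close> the crossing weight: \<open>12dv \<le> 12E + 12D \<le> 3dS + 2dL < 3d(v + 1) + 6dv\<close>.\<close>
  define v where "v = card \<M> - c"
  define E where "E = real (\<Sum>A\<in>\<C>. card (A \<inter> P))"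
  define D where "D = real (\<Sum>N\<in>{N\<in>\<N>. 2 \<le> card N}. card N)"
  define L where "L = real (card {N\<in>\<N>. 2 \<le> card N})"
  have "real (d * v) \<le> real ((\<Sum>A\<in>\<C>. card (A \<inter> P)) + (\<Sum>N\<in>{N\<in>\<N>. 2 \<le> card N}. card N))"
    using d_mult_excess_le_incidences unfolding v_def by (simp only: of_nat_le_iff)
  then have "real d * real v \<le> E + D" unfolding E_def D_def by simp
  moreover have "4 * E \<le> real d * crossing_weight F P"
    unfolding E_def by (rule sum_card_crossing_inter_le)
  moreover have "crossing_weight F P < real v + 1"
    using crossing_weight_less c_le_card_pileM by (simp add: v_def of_nat_diff)
  then have "real d * crossing_weight F P < real d * real v + real d"
    using d_ge_50 mult_strict_left_mono[of "crossing_weight F P" "real v + 1" "real d"]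
    by (simp add: distrib_left)
  moreover have "real (6 * (\<Sum>N\<in>{N\<in>\<N>. 2 \<le> card N}. card N)) \<le> real (d * card {N\<in>\<N>. 2 \<le> card N})"
    using sum_card_large_pileN_le by (simp only: of_nat_le_iff)
  then have "6 * D \<le> real d * L" unfolding D_def L_def by simp
  moreover have "L \<le> 3 * real v"
    using card_large_pileN_le_three_mult unfolding L_def v_def by (simp only: of_nat_le_iff)
  then have "real d * L \<le> 3 * (real d * real v)"
    using mult_left_mono[of L "3 * real v" "real d"] by simp
  ultimately have "real d * real v < real d * 1" by linarith
  then have "real v < 1" using d_ge_50 by (simp add: mult_less_cancel_left_pos)
  then have "v = 0" by simp
  then show ?thesis using c_le_card_pileM by (simp add: v_def)
qed

lemma card_good_le_one: "card {x\<in>P. good F d x} \<le> 1"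
  using card_good_less card_pileM_eq by simp

lemma card_pileN_member_le_one:
  assumes "N \<in> \<N>"
  shows "card N \<le> 1"
proof (rule ccontr)
  assume "\<not> card N \<le> 1"
  then have "{N\<in>\<N>. 2 \<le> card N} \<noteq> {}" using assms by auto
  then have "card {N\<in>\<N>. 2 \<le> card N} \<noteq> 0" using finite_pileN by simp
  then show False using card_large_pileN_le_three_mult card_pileM_eq by simp
qed

lemma pile_t_eq: "pile_t F d P = c"
  using card_pileG_plus_card_pileM[OF finite_P, of F] card_P card_pileM_eq
  by (simp add: pile_t_def)

end

theorem mainTheorem15:
  fixes n d c :: nat and F :: "nat set set" and P :: "nat set"
  assumes "d \<ge> 50"
    and "1 \<le> c" and "c \<le> d"
    and "F \<subseteq> Pow {1..n}"
    and "hereditary F"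
    and "int (min_deg n F) \<ge> 2 ^ (d - 1) - int c + 1"
    and "isolated_pile n F d P"
    and "(\<Sum>x\<in>P. weight F x) < 2 ^ d - real c"
  shows "card {x\<in>P. good F d x} \<le> 7
       \<and> pile_t F d P \<le> d + 4
       \<and> (\<forall>N\<in>pileN F P. card N \<le> 3)
       \<and> (\<forall>x\<in>P. bad F d x \<longrightarrow> {x} \<in> pileN F P)"
proof -
  interpret pile_setting n d c F P
    using assms by unfold_locales (auto simp: isolated_pile_def)
  show ?thesis
    using card_good_le_one pile_t_eq c_le_d card_pileN_member_le_one singleton_in_pileN_if_bad
    by fastforce
qed

end
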